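(* Let $n>k\ge 0$ be integers. There is a bijection between the set $\mathcal{C}_{n-1,k}$ of Pons--Batle words and the set of Young tableaux with walls and holes of type $(k,0,n-1)$. In particular, $|\mathcal{C}_{n-1,k}|=y_{k,0,n-1}$.
   Context: Pons--Batle words: for integers $N\ge k\ge 0$, $\mathcal{C}_{N,k}$ is the set of words over the alphabet $\{\omega_1,\dots,\omega_N\}$ in which each of $\omega_1,\dots,\omega_k$ occurs exactly three times and each of $\omega_{k+1},\dots,\omega_N$ occurs exactly twice, such that in every prefix of the word and for every $i$, either $\omega_i$ does not occur in the prefix, or the number of occurrences of $\omega_i$ in the prefix is at least the number of occurrences of $\omega_j$ in the prefix for every $j>i$. Young tableaux with walls and holes: for integers $k,\ell_1,\ell_2\ge 0$ with $N:=\ell_1+\ell_2\ge k$, a Young tableau with walls and holes of type $(k,\ell_1,\ell_2)$ consists of a subset $S\subseteq\{1,\dots,N\}$ with $|S|=\ell_2$ and a bijective filling of the cells of the following three-row shape with the integers $1,\dots,k+\ell_1+2\ell_2$: the top row has cells in columns $1,\dots,k$, the middle row has cells in columns $1,\dots,N$, and the bottom row has cells exactly in the columns of $S$. The filling must increase from left to right along the top row and along the middle row, and increase from bottom to top within every column; no condition is imposed among the entries of the bottom row (adjacent bottom cells are separated by "walls"). $y_{k,\ell_1,\ell_2}$ denotes the number of such tableaux (pairs $(S,\text{filling})$). For type $(k,0,n-1)$ the bottom row necessarily occupies all columns $1,\dots,n-1$. *)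

theory Defs
  imports Main
begin

(* Letters omega_1 .. omega_N are encoded as the natural numbers 1 .. N. *)

definition pb_words :: "nat \<Rightarrow> nat \<Rightarrow> nat list set" where
  "pb_words N k = {w. set w \<subseteq> {1..N}
      \<and> (\<forall>i\<in>{1..k}. count_list w i = 3)
      \<and> (\<forall>i\<in>{k<..N}. count_list w i = 2)
      \<and> (\<forall>m\<le>length w. \<forall>i\<in>{1..N}.
            count_list (take m w) i = 0 \<or>
            (\<forall>j\<in>{1..N}. i < j \<longrightarrow> count_list (take m w) j \<le> count_list (take m w) i))}"

(* Cells are pairs (row, column); row 1 = top, row 2 = middle, row 3 = bottom. *)
definition ytwh_cells :: "nat \<Rightarrow> nat \<Rightarrow> nat set \<Rightarrow> (nat \<times> nat) set" where
  "ytwh_cells k N S = {(1, c) | c. c \<in> {1..k}} \<union> {(2, c) | c. c \<in> {1..N}} \<union> {(3, c) | c. c \<in> S}"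

definition ytwh :: "nat \<Rightarrow> nat \<Rightarrow> nat \<Rightarrow> (nat set \<times> (nat \<times> nat \<Rightarrow> nat)) set" where
  "ytwh k l1 l2 = {(S, f). let N = l1 + l2 in
      S \<subseteq> {1..N} \<and> card S = l2
      \<and> bij_betw f (ytwh_cells k N S) {1..k + l1 + 2 * l2}
      \<and> (\<forall>x. x \<notin> ytwh_cells k N S \<longrightarrow> f x = 0)
      \<and> (\<forall>c. 1 \<le> c \<and> c < k \<longrightarrow> f (1, c) < f (1, Suc c))
      \<and> (\<forall>c. 1 \<le> c \<and> c < N \<longrightarrow> f (2, c) < f (2, Suc c))
      \<and> (\<forall>c\<in>{1..k}. c \<le> N \<longrightarrow> f (2, c) < f (1, c))
      \<and> (\<forall>c\<in>S. f (3, c) < f (2, c))}"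

definition y_count :: "nat \<Rightarrow> nat \<Rightarrow> nat \<Rightarrow> nat" where
  "y_count k l1 l2 = card (ytwh k l1 l2)"

end

theory Submission
  imports Defs
begin

(* A Pons--Batle word w becomes a tableau by sending each letter to its own column: the j-th
   occurrence of the letter c, at position p of w, becomes the entry p in column c and row 4 - j,
   so first occurrences fill the bottom row. Columns increase because the occurrences of a letter
   come in order. The middle and top rows increase by the prefix condition: if the t-th occurrence
   (t >= 2) of j came before the t-th occurrence of some i < j, then at that moment i has either
   not occurred yet, and at its first occurrence j has already occurred t > 1 times, or it has
   occurred fewer than t times; both are forbidden. Conversely, listing the columns of the cells
   in the order of their entries gives back the word. Everything about occurrences rests on the
   Galois connection: the j-th occurrence of c is at a position <= m iff c occurs at least j
   times among the first m letters. *)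

lemma count_list_take_mono:
  assumes "m \<le> m'"
  shows "count_list (take m w) c \<le> count_list (take m' w) c"
proof -
  have "take m' w = take m w @ take (m' - m) (drop m w)"
    using assms by (metis le_add_diff_inverse take_add)
  then show ?thesis by (metis count_list_append le_add1)
qed

lemma count_list_take_Suc:
  "i < length w \<Longrightarrow>
    count_list (take (Suc i) w) c = count_list (take i w) c + of_bool (w ! i = c)"
  by (simp add: take_Suc_conv_app_nth)

(* 1-based; for j > count_list w c it is a LEAST over an empty set, hence unspecified. *)
definition occurrence_pos :: "'a list \<Rightarrow> 'a \<Rightarrow> nat \<Rightarrow> nat" where
  "occurrence_pos w c j = (LEAST p. j \<le> count_list (take p w) c)"

lemma occurrence_pos_le_iff:
  assumes "j \<le> count_list w c"
  shows "occurrence_pos w c j \<le> m \<longleftrightarrow> j \<le> count_list (take m w) c"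
proof
  have "j \<le> count_list (take (length w) w) c" using assms by simp
  then have at: "j \<le> count_list (take (occurrence_pos w c j) w) c"
    unfolding occurrence_pos_def by (rule LeastI)
  assume "occurrence_pos w c j \<le> m"
  with at show "j \<le> count_list (take m w) c"
    using count_list_take_mono[of "occurrence_pos w c j" m w c] by linarith
next
  assume "j \<le> count_list (take m w) c"
  then show "occurrence_pos w c j \<le> m" unfolding occurrence_pos_def by (rule Least_le)
qed

lemma
  assumes "1 \<le> j" "j \<le> count_list w c"
  shows occurrence_pos_bounds: "occurrence_pos w c j \<in> {1..length w}"
    and nth_occurrence_pos: "w ! (occurrence_pos w c j - 1) = c"
    and count_list_take_occurrence_pos: "count_list (take (occurrence_pos w c j) w) c = j"
proof -
  note le_iff = occurrence_pos_le_iff[OF assms(2)]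
  have "\<not> occurrence_pos w c j \<le> 0" using le_iff[of 0] assms(1) by simp
  then obtain i where i: "occurrence_pos w c j = Suc i" using not0_implies_Suc by blast
  have len: "Suc i \<le> length w" using le_iff[of "length w"] i assms(2) by simp
  have before: "count_list (take i w) c < j" using le_iff[of i] i by simp
  have after: "j \<le> count_list (take (Suc i) w) c" using le_iff[of "Suc i"] i by simp
  have step: "count_list (take (Suc i) w) c = count_list (take i w) c + of_bool (w ! i = c)"
    using len by (rule count_list_take_Suc[OF Suc_le_lessD])
  have letter: "w ! i = c" using before after step by (cases "w ! i = c") auto
  show "occurrence_pos w c j \<in> {1..length w}" using i len by simp
  show "w ! (occurrence_pos w c j - 1) = c" using i letter by simp
  show "count_list (take (occurrence_pos w c j) w) c = j" using i before after step letter by simp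
qed

lemma occurrence_pos_nth_count:
  assumes "p \<in> {1..length w}"
  shows "occurrence_pos w (w ! (p - 1)) (count_list (take p w) (w ! (p - 1))) = p"
proof -
  let ?c = "w ! (p - 1)"
  let ?j = "count_list (take p w) ?c"
  have step: "?j = count_list (take (p - 1) w) ?c + 1"
    using count_list_take_Suc[of "p - 1" w ?c] assms by auto
  have "?j \<le> count_list w ?c"
    using count_list_take_mono[of p "length w" w ?c] assms by simp
  then have "occurrence_pos w ?c ?j \<le> m \<longleftrightarrow> ?j \<le> count_list (take m w) ?c" for m
    by (rule occurrence_pos_le_iff)
  then have "occurrence_pos w ?c ?j \<le> p" "\<not> occurrence_pos w ?c ?j \<le> p - 1"
    using step by simp_all
  then show ?thesis by linarith
qed

lemma occurrence_pos_strict_mono: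
  assumes "1 \<le> j" "j < j'" "j' \<le> count_list w c"
  shows "occurrence_pos w c j < occurrence_pos w c j'"
  using occurrence_pos_le_iff[OF assms(3), of "occurrence_pos w c j"]
    count_list_take_occurrence_pos[of j w c] assms
  by auto

definition reading_word :: "('r \<times> 'c) set \<Rightarrow> ('r \<times> 'c \<Rightarrow> nat) \<Rightarrow> nat \<Rightarrow> 'c list" where
  "reading_word C f L = map (\<lambda>p. snd (the_inv_into C f p)) [1..<Suc L]"

lemma length_reading_word: "length (reading_word C f L) = L"
  by (simp add: reading_word_def)

lemma count_list_take_reading_word:
  assumes "bij_betw f C {1..L}"
  shows "count_list (take m (reading_word C f L)) c = card {x \<in> C. snd x = c \<and> f x \<le> m}"
proof -
  let ?g = "the_inv_into C f"
  have "count_list (take m (reading_word C f L)) c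
      = length (filter (\<lambda>p. snd (?g p) = c) (take m [1..<Suc L]))"
    by (simp add: reading_word_def count_list_eq_length_filter take_map filter_map comp_def eq_commute)
  also have "\<dots> = card {p \<in> {1..L}. snd (?g p) = c \<and> p \<le> m}"
  proof -
    have "set (take m [1..<Suc L]) = {p \<in> {1..L}. p \<le> m}"
      by (cases "m \<le> L") (auto simp del: upt_Suc)
    then show ?thesis
      by (simp add: distinct_length_filter del: upt_Suc) (rule arg_cong[where f = card]; blast)
  qed
  also have "{p \<in> {1..L}. snd (?g p) = c \<and> p \<le> m} = f ` {x \<in> C. snd x = c \<and> f x \<le> m}"
  proof -
    have "inj_on f C" "f ` C = {1..L}" using assms by (simp_all add: bij_betw_def)
    then show ?thesis
      by (auto simp: the_inv_into_f_f f_the_inv_into_f the_inv_into_into intro!: image_eqI)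
  qed
  also have "card \<dots> = card {x \<in> C. snd x = c \<and> f x \<le> m}"
    using assms by (intro card_image) (auto simp: bij_betw_def intro: inj_on_subset)
  finally show ?thesis .
qed

lemma set_reading_word:
  assumes "bij_betw f C {1..L}"
  shows "set (reading_word C f L) = snd ` C"
proof -
  have "the_inv_into C f ` {1..L} = C" using bij_betw_imp_surj_on[OF bij_betw_the_inv_into[OF assms]] .
  moreover have "set (reading_word C f L) = snd ` the_inv_into C f ` {1..L}"
    by (simp add: reading_word_def image_image atLeastLessThanSuc_atLeastAtMost del: upt_Suc)
  ultimately show ?thesis by simp
qed

lemma less_of_Suc_less_on_interval:
  fixes a :: "nat \<Rightarrow> 'b :: order"
  assumes "\<forall>c. 1 \<le> c \<and> c < n \<longrightarrow> a c < a (Suc c)" "1 \<le> i" "i < j" "j \<le> n"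
  shows "a i < a j"
proof -
  have "Suc i \<le> j" using assms(3) by simp
  then show ?thesis using assms(4)
  proof (induction j rule: dec_induct)
    case base
    then show ?case using assms(1,2) by simp
  next
    case (step j)
    then show ?case using assms(1,2) by (auto intro: less_trans)
  qed
qed

lemma count_list_pb_word:
  "w \<in> pb_words N k \<Longrightarrow>
    count_list w c = (if c \<in> {1..N} then if c \<le> k then 3 else 2 else 0)"
  unfolding pb_words_def by (auto simp: count_list_0_iff)

lemma length_pb_word:
  assumes "w \<in> pb_words N k" "k \<le> N"
  shows "length w = k + 2 * N"
proof -
  have "set w \<subseteq> {1..N}" using assms(1) unfolding pb_words_def by blast
  then have "length w = (\<Sum>c\<in>{1..N}. count_list w c)" by (simp add: sum_count_set)
  also have "\<dots> = (\<Sum>c\<in>{1..k}. count_list w c) + (\<Sum>c\<in>{k<..N}. count_list w c)"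
  proof -
    have "{1..N} = {1..k} \<union> {k<..N}" using assms(2) by auto
    then show ?thesis by (simp, subst sum.union_disjoint) auto
  qed
  also have "\<dots> = (\<Sum>c\<in>{1..k}. 3) + (\<Sum>c\<in>{k<..N}. 2)"
    using assms by (intro arg_cong2[where f = "(+)"] sum.cong) (auto simp: count_list_pb_word)
  finally show ?thesis using assms(2) by simp
qed

lemma pb_word_cell_iff:
  assumes "w \<in> pb_words N k" "k \<le> N"
  shows "(r, c) \<in> ytwh_cells k N {1..N} \<longleftrightarrow> 1 \<le> r \<and> r \<le> 3 \<and> 4 - r \<le> count_list w c"
  using assms by (auto simp: ytwh_cells_def count_list_pb_word)

lemma pb_word_occurrence_pos_less:
  assumes w: "w \<in> pb_words N k" and "i < j" "2 \<le> t" "t \<le> count_list w i" "t \<le> count_list w j"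
  shows "occurrence_pos w i t < occurrence_pos w j t"
proof -
  define p where "p = occurrence_pos w j t"
  have p: "p \<le> length w" "w ! (p - 1) = j" "count_list (take p w) j = t"
    using occurrence_pos_bounds[of t w j] nth_occurrence_pos[of t w j]
      count_list_take_occurrence_pos[of t w j] assms
    unfolding p_def by auto
  have "i \<in> {1..N}" "j \<in> {1..N}"
    using assms count_list_pb_word[OF w, of i] count_list_pb_word[OF w, of j] by (auto split: if_splits)
  then have prefix: "count_list (take m w) i = 0 \<or> count_list (take m w) j \<le> count_list (take m w) i"
    if "m \<le> length w" for m
    using w \<open>i < j\<close> that unfolding pb_words_def by blast
  show ?thesis
  proof (cases "count_list (take p w) i = 0")
    case True
    define q where "q = occurrence_pos w i 1"
    have q: "q \<le> length w" "count_list (take q w) i = 1"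
      using occurrence_pos_bounds[of 1 w i] count_list_take_occurrence_pos[of 1 w i] assms
      unfolding q_def by auto
    have "p < q"
      using occurrence_pos_le_iff[of 1 w i p] True assms unfolding q_def by simp
    then have "t \<le> count_list (take q w) j"
      using count_list_take_mono[of p q w j] p(3) by simp
    then show ?thesis using prefix[OF q(1)] q(2) \<open>2 \<le> t\<close> by simp
  next
    case False
    then have "occurrence_pos w i t \<le> p"
      using prefix[OF p(1)] p(3) occurrence_pos_le_iff[of t w i p] assms(4) by simp
    moreover have "occurrence_pos w i t \<noteq> p"
      using nth_occurrence_pos[of t w i] p(2) assms by auto
    ultimately show ?thesis unfolding p_def by simp
  qed
qed

definition pb_filling :: "nat \<Rightarrow> nat \<Rightarrow> nat list \<Rightarrow> nat \<times> nat \<Rightarrow> nat" where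
  "pb_filling k N w x =
     (if x \<in> ytwh_cells k N {1..N} then occurrence_pos w (snd x) (4 - fst x) else 0)"

lemma nth_pb_filling:
  assumes "w \<in> pb_words N k" "k \<le> N" "x \<in> ytwh_cells k N {1..N}"
  shows "w ! (pb_filling k N w x - 1) = snd x"
proof -
  have "1 \<le> 4 - fst x" "4 - fst x \<le> count_list w (snd x)"
    using assms pb_word_cell_iff[OF assms(1,2), of "fst x" "snd x"] by auto
  then show ?thesis using assms(3) nth_occurrence_pos by (simp add: pb_filling_def)
qed

lemma pb_filling_bij:
  assumes w: "w \<in> pb_words N k" and "k \<le> N"
  shows "bij_betw (pb_filling k N w) (ytwh_cells k N {1..N}) {1..length w}"
proof -
  let ?C = "ytwh_cells k N {1..N}"
  have cell: "x \<in> ?C \<longleftrightarrow> 1 \<le> fst x \<and> fst x \<le> 3 \<and> 4 - fst x \<le> count_list w (snd x)"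
    for x
    using pb_word_cell_iff[OF assms, of "fst x" "snd x"] by simp
  have rank: "x \<in> ?C \<Longrightarrow> count_list (take (pb_filling k N w x) w) (snd x) = 4 - fst x" for x
    using count_list_take_occurrence_pos[of "4 - fst x" w "snd x"] cell[of x]
    by (auto simp: pb_filling_def)
  have "inj_on (pb_filling k N w) ?C"
  proof (rule inj_onI)
    fix x y assume x: "x \<in> ?C" and y: "y \<in> ?C" and eq: "pb_filling k N w x = pb_filling k N w y"
    have "snd x = snd y" using nth_pb_filling[OF assms x] nth_pb_filling[OF assms y] eq by simp
    moreover have "fst x = fst y" using rank[OF x] rank[OF y] eq cell[of x] cell[of y] x y
      \<open>snd x = snd y\<close> by auto
    ultimately show "x = y" by (simp add: prod_eq_iff)
  qed
  moreover have "pb_filling k N w x \<in> {1..length w}" if "x \<in> ?C" for x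
    using occurrence_pos_bounds[of "4 - fst x" w "snd x"] cell[of x] that
    by (auto simp: pb_filling_def)
  moreover have "{1..length w} \<subseteq> pb_filling k N w ` ?C"
  proof
    fix p assume p: "p \<in> {1..length w}"
    define c where "c = w ! (p - 1)"
    define j where "j = count_list (take p w) c"
    have "j = count_list (take (p - 1) w) c + 1"
      using count_list_take_Suc[of "p - 1" w c] p unfolding j_def c_def by auto
    moreover have "j \<le> count_list w c"
      using count_list_take_mono[of p "length w" w c] p unfolding j_def by simp
    moreover have "count_list w c \<le> 3" using count_list_pb_word[OF w, of c] by simp
    ultimately have "(4 - j, c) \<in> ?C" "4 - (4 - j) = j" using cell[of "(4 - j, c)"] by auto
    moreover have "pb_filling k N w (4 - j, c) = p"
      using calculation occurrence_pos_nth_count[OF p] unfolding c_def j_def pb_filling_def by simp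
    ultimately show "p \<in> pb_filling k N w ` ?C" by (metis image_eqI)
  qed
  ultimately show ?thesis unfolding bij_betw_def by blast
qed

lemma pb_filling_in_ytwh:
  assumes w: "w \<in> pb_words N k" and "k \<le> N"
  shows "({1..N}, pb_filling k N w) \<in> ytwh k 0 N"
proof -
  let ?C = "ytwh_cells k N {1..N}"
  have row: "pb_filling k N w (r, c) < pb_filling k N w (r, Suc c)"
    if "r \<le> 2" "1 \<le> c" "(r, Suc c) \<in> ?C" for r c
  proof -
    have "(r, c) \<in> ?C" using that by (auto simp: ytwh_cells_def)
    moreover have "4 - r \<le> count_list w c" "4 - r \<le> count_list w (Suc c)"
      using calculation that pb_word_cell_iff[OF assms, of r c] pb_word_cell_iff[OF assms, of r "Suc c"]
      by simp_all
    ultimately show ?thesis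
      using that pb_word_occurrence_pos_less[OF w, of c "Suc c" "4 - r"] by (simp add: pb_filling_def)
  qed
  have column: "pb_filling k N w (r, c) < pb_filling k N w (r', c)"
    if "r' < r" "(r, c) \<in> ?C" "(r', c) \<in> ?C" for r r' c
    using that occurrence_pos_strict_mono[of "4 - r" "4 - r'" w c]
      pb_word_cell_iff[OF assms, of r c] pb_word_cell_iff[OF assms, of r' c]
    by (auto simp: pb_filling_def)
  have rows: "\<forall>c. 1 \<le> c \<and> c < k \<longrightarrow> pb_filling k N w (1, c) < pb_filling k N w (1, Suc c)"
    "\<forall>c. 1 \<le> c \<and> c < N \<longrightarrow> pb_filling k N w (2, c) < pb_filling k N w (2, Suc c)"
    by (auto simp: ytwh_cells_def intro!: row)
  have columns: "\<forall>c\<in>{1..k}. c \<le> N \<longrightarrow> pb_filling k N w (2, c) < pb_filling k N w (1, c)"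
    "\<forall>c\<in>{1..N}. pb_filling k N w (3, c) < pb_filling k N w (2, c)"
    by (auto simp: ytwh_cells_def intro!: column)
  show ?thesis
    using pb_filling_bij[OF assms] length_pb_word[OF assms] rows columns
    by (simp add: ytwh_def pb_filling_def)
qed

lemma pb_filling_inj:
  assumes "k \<le> N"
  shows "inj_on (pb_filling k N) (pb_words N k)"
proof (rule inj_onI)
  fix w w' assume w: "w \<in> pb_words N k" and w': "w' \<in> pb_words N k"
    and eq: "pb_filling k N w = pb_filling k N w'"
  show "w = w'"
  proof (rule nth_equalityI)
    show len: "length w = length w'" using length_pb_word w w' assms by simp
    fix i assume "i < length w"
    then have "Suc i \<in> pb_filling k N w ` ytwh_cells k N {1..N}"
      using pb_filling_bij[OF w assms] by (simp add: bij_betw_def)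
    then obtain x where x: "x \<in> ytwh_cells k N {1..N}" and "pb_filling k N w x = Suc i"
      by (metis imageE)
    then show "w ! i = w' ! i"
      using nth_pb_filling[OF w assms x] nth_pb_filling[OF w' assms x] eq by simp
  qed
qed

lemma ytwh_0_bottom_row:
  "(S, f) \<in> ytwh k 0 N \<Longrightarrow> S = {1..N}"
  by (simp add: ytwh_def Let_def card_subset_eq)

lemma card_column_ytwh_cells:
  assumes "c \<in> {1..N}"
  shows "card {x \<in> ytwh_cells k N {1..N}. snd x = c \<and> P x}
     = of_bool (P (3, c)) + of_bool (P (2, c)) + of_bool (c \<le> k \<and> P (1, c))"
proof -
  have "{x \<in> ytwh_cells k N {1..N}. snd x = c \<and> P x} =
      (if P (3, c) then {(3, c)} else {}) \<union> (if P (2, c) then {(2, c)} else {})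
      \<union> (if c \<le> k \<and> P (1, c) then {(1, c)} else {})"
    using assms by (auto simp: ytwh_cells_def split: if_splits)
  then show ?thesis by (simp split: if_splits)
qed

context
  fixes k N :: nat and f :: "nat \<times> nat \<Rightarrow> nat"
  assumes tableau: "({1..N}, f) \<in> ytwh k 0 N" and "k \<le> N"
begin

lemma ytwh_bij: "bij_betw f (ytwh_cells k N {1..N}) {1..k + 2 * N}"
  using tableau by (simp add: ytwh_def Let_def)

lemma ytwh_zero: "x \<notin> ytwh_cells k N {1..N} \<Longrightarrow> f x = 0"
  using tableau by (cases x) (simp add: ytwh_def Let_def)

lemma ytwh_row_1: "1 \<le> i \<Longrightarrow> i < j \<Longrightarrow> j \<le> k \<Longrightarrow> f (1, i) < f (1, j)"
  using tableau less_of_Suc_less_on_interval[of k "\<lambda>c. f (1, c)" i j]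
  by (simp add: ytwh_def Let_def)

lemma ytwh_row_2: "1 \<le> i \<Longrightarrow> i < j \<Longrightarrow> j \<le> N \<Longrightarrow> f (2, i) < f (2, j)"
  using tableau less_of_Suc_less_on_interval[of N "\<lambda>c. f (2, c)" i j]
  by (simp add: ytwh_def Let_def)

lemma ytwh_column:
  "c \<in> {1..N} \<Longrightarrow> f (3, c) < f (2, c) \<and> (c \<le> k \<longrightarrow> f (2, c) < f (1, c))"
  using tableau by (simp add: ytwh_def Let_def)

lemma count_list_take_reading_word_ytwh:
  assumes "c \<in> {1..N}"
  shows "count_list (take m (reading_word (ytwh_cells k N {1..N}) f (k + 2 * N))) c
    = of_bool (f (3, c) \<le> m) + of_bool (f (2, c) \<le> m) + of_bool (c \<le> k \<and> f (1, c) \<le> m)"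
  unfolding count_list_take_reading_word[OF ytwh_bij] using assms by (rule card_column_ytwh_cells)

lemma ytwh_le_iff_count_list_take:
  assumes "(r, c) \<in> ytwh_cells k N {1..N}"
  shows "f (r, c) \<le> m \<longleftrightarrow>
    4 - r \<le> count_list (take m (reading_word (ytwh_cells k N {1..N}) f (k + 2 * N))) c"
proof -
  have c: "c \<in> {1..N}" and r: "r = 3 \<or> r = 2 \<or> r = 1 \<and> c \<le> k"
    using assms \<open>k \<le> N\<close> by (auto simp: ytwh_cells_def)
  show ?thesis
    using r ytwh_column[OF c] unfolding count_list_take_reading_word_ytwh[OF c] by auto
qed

lemma reading_word_in_pb_words:
  "reading_word (ytwh_cells k N {1..N}) f (k + 2 * N) \<in> pb_words N k"
proof -
  let ?C = "ytwh_cells k N {1..N}"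
  let ?w = "reading_word ?C f (k + 2 * N)"
  have "set ?w \<subseteq> {1..N}"
    using set_reading_word[OF ytwh_bij] \<open>k \<le> N\<close> by (auto simp: ytwh_cells_def)
  moreover have count: "count_list ?w c = (if c \<le> k then 3 else 2)" if "c \<in> {1..N}" for c
  proof -
    have "x \<in> ?C \<Longrightarrow> f x \<le> k + 2 * N" for x using ytwh_bij by (auto simp: bij_betw_def)
    moreover have "(3, c) \<in> ?C" "(2, c) \<in> ?C" "c \<le> k \<Longrightarrow> (1, c) \<in> ?C"
      using that by (auto simp: ytwh_cells_def)
    ultimately show ?thesis
      using count_list_take_reading_word_ytwh[OF that, of "k + 2 * N"]
      by (simp add: length_reading_word)
  qed
  then have "\<forall>c\<in>{1..k}. count_list ?w c = 3" "\<forall>c\<in>{k<..N}. count_list ?w c = 2"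
    using \<open>k \<le> N\<close> by auto
  moreover have "count_list (take m ?w) i = 0 \<or> count_list (take m ?w) j \<le> count_list (take m ?w) i"
    if "i \<in> {1..N}" "j \<in> {1..N}" "i < j" for i j m
    using that ytwh_row_1[of i j] ytwh_row_2[of i j] ytwh_column[of i] ytwh_column[of j]
    unfolding count_list_take_reading_word_ytwh[OF that(1)]
      count_list_take_reading_word_ytwh[OF that(2)]
    by (auto simp: of_bool_def)
  ultimately show ?thesis unfolding pb_words_def by blast
qed

lemma pb_filling_reading_word:
  "pb_filling k N (reading_word (ytwh_cells k N {1..N}) f (k + 2 * N)) = f"
proof
  let ?C = "ytwh_cells k N {1..N}"
  let ?w = "reading_word ?C f (k + 2 * N)"
  fix x
  show "pb_filling k N ?w x = f x"
  proof (cases "x \<in> ?C")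
    case False
    then show ?thesis by (simp add: pb_filling_def ytwh_zero)
  next
    case True
    obtain r c where x: "x = (r, c)" by fastforce
    have "4 - r \<le> count_list ?w c"
      using True pb_word_cell_iff[OF reading_word_in_pb_words \<open>k \<le> N\<close>] unfolding x by simp
    then have "occurrence_pos ?w c (4 - r) \<le> m \<longleftrightarrow> f (r, c) \<le> m" for m
      using occurrence_pos_le_iff ytwh_le_iff_count_list_take True unfolding x by simp
    then have "occurrence_pos ?w c (4 - r) = f (r, c)" by (metis le_antisym order_refl)
    then show ?thesis using True by (simp add: pb_filling_def x)
  qed
qed

end

lemma bij_betw_pb_words_ytwh:
  assumes "k \<le> N"
  shows "bij_betw (\<lambda>w. ({1..N}, pb_filling k N w)) (pb_words N k) (ytwh k 0 N)"
proof (rule bij_betw_imageI)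
  show "inj_on (\<lambda>w. ({1..N}, pb_filling k N w)) (pb_words N k)"
    using pb_filling_inj[OF assms] by (simp add: inj_on_def)
  show "(\<lambda>w. ({1..N}, pb_filling k N w)) ` pb_words N k = ytwh k 0 N"
  proof
    show "(\<lambda>w. ({1..N}, pb_filling k N w)) ` pb_words N k \<subseteq> ytwh k 0 N"
      using pb_filling_in_ytwh assms by blast
    show "ytwh k 0 N \<subseteq> (\<lambda>w. ({1..N}, pb_filling k N w)) ` pb_words N k"
    proof
      fix T assume "T \<in> ytwh k 0 N"
      then obtain f where T: "T = ({1..N}, f)" and tableau: "({1..N}, f) \<in> ytwh k 0 N"
        using ytwh_0_bottom_row by (metis prod.collapse)
      show "T \<in> (\<lambda>w. ({1..N}, pb_filling k N w)) ` pb_words N k"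
        using reading_word_in_pb_words[OF tableau assms] pb_filling_reading_word[OF tableau assms]
        unfolding T by (metis image_eqI)
    qed
  qed
qed

theorem lemma8:
  fixes n k :: nat
  assumes "n > k"
  shows "(\<exists>g. bij_betw g (pb_words (n - 1) k) (ytwh k 0 (n - 1)))
         \<and> card (pb_words (n - 1) k) = y_count k 0 (n - 1)"
proof -
  have "k \<le> n - 1" using assms by simp
  then have "bij_betw (\<lambda>w. ({1..n - 1}, pb_filling k (n - 1) w))
      (pb_words (n - 1) k) (ytwh k 0 (n - 1))"
    by (rule bij_betw_pb_words_ytwh)
  then show ?thesis unfolding y_count_def using bij_betw_same_card by blast
qed

end
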